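(* Let $\tilde d_2$ be a metric on $\mathbb R^2$ for which there exist continuous functions $g_1,g_2:[0,\infty)\to[0,\infty)$ with $g_1(1)=g_2(1)=1$ such that $\tilde d_2(x,y)=g_1(|x-y|)$ whenever $x_1=y_1$, and $\tilde d_2(x,y)=g_2(|x-y|)$ whenever $x_2=y_2=0$ (where $x=(x_1,x_2)$, $y=(y_1,y_2)$). Then the following are equivalent: (i) $\tilde d_2=d_2$; (ii) $\mathcal C_{\tilde d_2}(P_1,P_2)=\mathcal C_{d_2}(P_1,P_2)$ for all $P_1,P_2\in\mathbb R^2$.
   Context: $|\cdot|$ is the Euclidean norm. The river metric on $\mathbb R^2$ is $d_2(A,B)=|A_2-B_2|$ if $A_1=B_1$, and $d_2(A,B)=|A_2|+|A_1-B_1|+|B_2|$ if $A_1\neq B_1$, for $A=(A_1,A_2)$, $B=(B_1,B_2)$. For a metric $d$ on a set $M$ and $A,B\in M$, $\mathcal C_d(A,B)=\{X\in M:\ d(X,A)=d(X,B)+d(A,B)<+\infty\}$. *)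

theory Defs
  imports "HOL-Analysis.Analysis"
begin

(* Points of R^2 are pairs (x1,x2) :: real \<times> real; on this type dist is the Euclidean
   distance sqrt((x1-y1)^2 + (x2-y2)^2). *)

definition river_metric :: "real \<times> real \<Rightarrow> real \<times> real \<Rightarrow> real" where
  "river_metric A B =
     (if fst A = fst B then \<bar>snd A - snd B\<bar>
      else \<bar>snd A\<bar> + \<bar>fst A - fst B\<bar> + \<bar>snd B\<bar>)"

definition is_metric :: "('a \<Rightarrow> 'a \<Rightarrow> real) \<Rightarrow> bool" where
  "is_metric d \<longleftrightarrow>
     (\<forall>x y. 0 \<le> d x y) \<and> (\<forall>x y. d x y = 0 \<longleftrightarrow> x = y) \<and>
     (\<forall>x y. d x y = d y x) \<and> (\<forall>x y z. d x z \<le> d x y + d y z)"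

(* C_d(A,B) = {X. d(X,A) = d(X,B) + d(A,B)}; finiteness is automatic for real-valued d *)
definition metric_C :: "('a \<Rightarrow> 'a \<Rightarrow> real) \<Rightarrow> 'a \<Rightarrow> 'a \<Rightarrow> 'a set" where
  "metric_C d A B = {X. d X A = d X B + d A B}"

end

theory Submission
  imports Defs
begin

text \<open>
  If d has the same sets C as the river metric, then every river-metric betweenness relation
  X, B, A (with d(X,A) = d(X,B) + d(A,B)) also holds for d. Betweenness along a vertical line
  and along the horizontal axis makes g1 and g2 additive on [0,\<infinity>); being nonnegative they are
  monotone, hence linear, and g(1) = 1 forces g(t) = t. So d agrees with the river metric on
  vertical lines and on the axis. For A, B with different abscissae, the feet (A1,0) and (B1,0)
  lie between A and B in the river metric, which splits d(A,B) into a vertical, a horizontal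
  and a vertical piece.
\<close>

lemma additive_nonneg_mult_of_nat:
  fixes f :: "real \<Rightarrow> real"
  assumes add: "\<And>s t. 0 \<le> s \<Longrightarrow> 0 \<le> t \<Longrightarrow> f (s + t) = f s + f t"
    and "0 \<le> s"
  shows "f (real n * s) = real n * f s"
proof (induction n)
  case 0
  have "f 0 = f 0 + f 0" using add[of 0 0] by simp
  then show ?case by simp
next
  case (Suc n)
  have "f (real (Suc n) * s) = f (real n * s + s)" by (simp add: algebra_simps)
  also have "\<dots> = f (real n * s) + f s" using add \<open>0 \<le> s\<close> by simp
  finally show ?case using Suc by (simp add: algebra_simps)
qed

lemma additive_nonneg_rational:
  fixes f :: "real \<Rightarrow> real"
  assumes add: "\<And>s t. 0 \<le> s \<Longrightarrow> 0 \<le> t \<Longrightarrow> f (s + t) = f s + f t"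
    and "0 < n"
  shows "f (real m / real n) = f 1 * (real m / real n)"
proof -
  have "f 1 = f (real n * (1 / real n))" using \<open>0 < n\<close> by simp
  also have "\<dots> = real n * f (1 / real n)"
    using additive_nonneg_mult_of_nat[of f, OF add, of "1 / real n" n] by simp
  finally have "f (1 / real n) = f 1 / real n" using \<open>0 < n\<close> by (simp add: field_simps)
  moreover have "f (real m * (1 / real n)) = real m * f (1 / real n)"
    using additive_nonneg_mult_of_nat[of f, OF add, of "1 / real n" m] by simp
  ultimately show ?thesis by simp
qed

lemma additive_nonneg_mono:
  fixes f :: "real \<Rightarrow> real"
  assumes add: "\<And>s t. 0 \<le> s \<Longrightarrow> 0 \<le> t \<Longrightarrow> f (s + t) = f s + f t"
    and nonneg: "\<And>t. 0 \<le> t \<Longrightarrow> 0 \<le> f t"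
    and "0 \<le> s" "s \<le> u"
  shows "f s \<le> f u"
proof -
  have "f u = f s + f (u - s)" using add[of s "u - s"] assms(3,4) by simp
  then show ?thesis using nonneg[of "u - s"] \<open>s \<le> u\<close> by simp
qed

text \<open>Cauchy's equation on [0,\<infinity>): nonnegativity replaces the usual continuity hypothesis.\<close>

lemma additive_nonneg_imp_linear:
  fixes f :: "real \<Rightarrow> real"
  assumes add: "\<And>s t. 0 \<le> s \<Longrightarrow> 0 \<le> t \<Longrightarrow> f (s + t) = f s + f t"
    and nonneg: "\<And>t. 0 \<le> t \<Longrightarrow> 0 \<le> f t"
    and t: "0 \<le> t"
  shows "f t = f 1 * t"
proof -
  have mono: "f s \<le> f u" if "0 \<le> s" "s \<le> u" for s u
    using additive_nonneg_mono[of f, OF add nonneg that] .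
  have squeeze: "\<bar>f t - f 1 * t\<bar> \<le> f 1 / real n" if "0 < n" for n
  proof -
    define m where "m = nat \<lfloor>real n * t\<rfloor>"
    have fl: "real m = of_int \<lfloor>real n * t\<rfloor>" using t by (simp add: m_def)
    have n: "0 < real n" using that by simp
    have "real m \<le> real n * t" "real n * t \<le> real m + 1" using fl by linarith+
    then have lo: "real m / real n \<le> t" and hi: "t \<le> real (m + 1) / real n"
      using n by (simp_all add: field_simps)
    have "f 1 * (real m / real n) \<le> f t"
      using mono[OF _ lo] additive_nonneg_rational[of f, OF add that] by simp
    moreover have "f t \<le> f 1 * (real m / real n) + f 1 / real n"
      using mono[OF t hi] additive_nonneg_rational[of f, OF add that, of "m + 1"]
      by (simp add: add_divide_distrib distrib_left)
    moreover have "f 1 * (real m / real n) \<le> f 1 * t"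
      using mult_left_mono[OF lo, of "f 1"] nonneg[of 1] by simp
    moreover have "f 1 * t \<le> f 1 * (real m / real n) + f 1 / real n"
      using hi nonneg[of 1] mult_left_mono[OF hi, of "f 1"]
      by (simp add: add_divide_distrib distrib_left)
    ultimately show ?thesis by linarith
  qed
  show ?thesis
  proof (rule ccontr)
    assume "f t \<noteq> f 1 * t"
    then have e: "0 < \<bar>f t - f 1 * t\<bar>" by simp
    obtain n :: nat where n: "f 1 / \<bar>f t - f 1 * t\<bar> < real n"
      using reals_Archimedean2 by blast
    have "0 \<le> f 1 / \<bar>f t - f 1 * t\<bar>" using nonneg[of 1] e by simp
    then have "0 < n" using n by linarith
    then have "f 1 / real n < \<bar>f t - f 1 * t\<bar>" using n e by (simp add: field_simps)
    then show False using squeeze[OF \<open>0 < n\<close>] by simp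
  qed
qed

lemma metric_C_eq_imp_between:
  assumes "\<forall>P1 P2. metric_C d P1 P2 = metric_C d' P1 P2"
    and "d' X A = d' X B + d' A B"
  shows "d X A = d X B + d A B"
  using assms unfolding metric_C_def by blast

lemma river_metric_unique:
  fixes d :: "real \<times> real \<Rightarrow> real \<times> real \<Rightarrow> real"
  assumes sym: "\<And>x y. d x y = d y x"
    and vertical: "\<And>x y. fst x = fst y \<Longrightarrow> d x y = \<bar>snd x - snd y\<bar>"
    and axis: "\<And>a b. d (a, 0) (b, 0) = \<bar>a - b\<bar>"
    and between: "\<And>X A B. river_metric X A = river_metric X B + river_metric A B \<Longrightarrow>
                            d X A = d X B + d A B"
  shows "d = river_metric"
proof (intro ext)
  fix A B :: "real \<times> real"
  obtain a1 a2 b1 b2 where AB: "A = (a1, a2)" "B = (b1, b2)" by (cases A, cases B)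
  show "d A B = river_metric A B"
  proof (cases "a1 = b1")
    case True
    then show ?thesis using vertical[of A B] AB by (simp add: river_metric_def)
  next
    case False
    have "d A B = d A (a1, 0) + d (a1, 0) B"
      using between[of A B "(a1, 0)"] False AB sym[of B "(a1, 0)"]
      by (simp add: river_metric_def)
    moreover have "d B (a1, 0) = d B (b1, 0) + d (a1, 0) (b1, 0)"
      using between[of B "(a1, 0)" "(b1, 0)"] False AB by (simp add: river_metric_def)
    ultimately show ?thesis
      using False AB vertical[of A "(a1, 0)"] vertical[of B "(b1, 0)"] axis[of a1 b1]
        sym[of B "(a1, 0)"] by (simp add: river_metric_def)
  qed
qed

theorem theorem3p5:
  fixes d :: "real \<times> real \<Rightarrow> real \<times> real \<Rightarrow> real"
    and g1 g2 :: "real \<Rightarrow> real"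
  assumes "is_metric d"
    and "continuous_on {0..} g1" and "continuous_on {0..} g2"
    and "g1 ` {0..} \<subseteq> {0..}" and "g2 ` {0..} \<subseteq> {0..}"
    and "g1 1 = 1" and "g2 1 = 1"
    and "\<And>x y. fst x = fst y \<Longrightarrow> d x y = g1 (dist x y)"
    and "\<And>x y. snd x = 0 \<Longrightarrow> snd y = 0 \<Longrightarrow> d x y = g2 (dist x y)"
  shows "d = river_metric \<longleftrightarrow>
         (\<forall>P1 P2. metric_C d P1 P2 = metric_C river_metric P1 P2)"
proof
  show "\<forall>P1 P2. metric_C d P1 P2 = metric_C river_metric P1 P2" if "d = river_metric"
    using that by simp
next
  assume "\<forall>P1 P2. metric_C d P1 P2 = metric_C river_metric P1 P2"
  note between = metric_C_eq_imp_between[OF this]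
  have g1: "g1 t = t" if "0 \<le> t" for t
  proof -
    have "g1 (s + u) = g1 s + g1 u" if "0 \<le> s" "0 \<le> u" for s u
      using between[of "(0, 0)" "(0, s + u)" "(0, s)"] that
      by (simp add: river_metric_def assms(8) dist_Pair_Pair dist_real_def add.commute)
    moreover have "0 \<le> g1 s" if "0 \<le> s" for s
      using assms(4) that by auto
    ultimately show ?thesis
      using additive_nonneg_imp_linear[of g1 t] \<open>0 \<le> t\<close> assms(6) by simp
  qed
  have g2: "g2 t = t" if "0 \<le> t" for t
  proof -
    have "g2 (s + u) = g2 s + g2 u" if "0 \<le> s" "0 \<le> u" for s u
      using between[of "(0, 0)" "(s + u, 0)" "(s, 0)"] that
      by (simp add: river_metric_def assms(9) dist_Pair_Pair dist_real_def add.commute)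
    moreover have "0 \<le> g2 s" if "0 \<le> s" for s
      using assms(5) that by auto
    ultimately show ?thesis
      using additive_nonneg_imp_linear[of g2 t] \<open>0 \<le> t\<close> assms(7) by simp
  qed
  show "d = river_metric"
  proof (rule river_metric_unique)
    show "d x y = d y x" for x y using assms(1) unfolding is_metric_def by blast
    show "d x y = \<bar>snd x - snd y\<bar>" if "fst x = fst y" for x y
      using that assms(8)[OF that] g1 by (cases x, cases y) (simp add: dist_Pair_Pair dist_real_def)
    show "d (a, 0) (b, 0) = \<bar>a - b\<bar>" for a b
      using assms(9)[of "(a, 0)" "(b, 0)"] g2 by (simp add: dist_Pair_Pair dist_real_def)
  qed (rule between)
qed

end
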